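(* Let $S$ be an intra-regular $\Gamma$-AG$^{**}$-groupoid. Then for all two-sided $\Gamma$-ideals $I,J$ of $S$, $I\Gamma J=I\cap J$.
   Context: Let $S$ and $\Gamma$ be nonempty sets with a map $S\times\Gamma\times S\to S$, $(x,\gamma,y)\mapsto x\gamma y$. $S$ is a $\Gamma$-AG-groupoid if $(x\gamma y)\delta z=(z\gamma y)\delta x$ for all $x,y,z\in S$, $\gamma,\delta\in\Gamma$; it is a $\Gamma$-AG$^{**}$-groupoid if moreover $a\alpha(b\beta c)=b\alpha(a\beta c)$ for all $a,b,c\in S$, $\alpha,\beta\in\Gamma$. For subsets $A,B\subseteq S$, $A\Gamma B=\{a\gamma b: a\in A,\gamma\in\Gamma,b\in B\}$. $S$ is intra-regular if for every $a\in S$ there exist $x,y\in S$ and $\beta,\gamma,\delta\in\Gamma$ with $a=(x\beta(a\delta a))\gamma y$. A nonempty subset $A$ is a two-sided $\Gamma$-ideal if $S\Gamma A\subseteq A$ and $A\Gamma S\subseteq A$. *)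

theory Defs
  imports Main
begin

text \<open>S and Gamma are modelled as (nonempty) types 's and 'g; the ternary
operation is f :: 's => 'g => 's => 's, with f x g y standing for x g y.\<close>

definition gamma_AG_groupoid :: "('s \<Rightarrow> 'g \<Rightarrow> 's \<Rightarrow> 's) \<Rightarrow> bool" where
  "gamma_AG_groupoid f \<longleftrightarrow>
     (\<forall>x y z \<gamma> \<delta>. f (f x \<gamma> y) \<delta> z = f (f z \<gamma> y) \<delta> x)"

definition gamma_AG2_groupoid :: "('s \<Rightarrow> 'g \<Rightarrow> 's \<Rightarrow> 's) \<Rightarrow> bool" where
  "gamma_AG2_groupoid f \<longleftrightarrow> gamma_AG_groupoid f \<and>
     (\<forall>a b c \<alpha> \<beta>. f a \<alpha> (f b \<beta> c) = f b \<alpha> (f a \<beta> c))"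

definition gprod :: "('s \<Rightarrow> 'g \<Rightarrow> 's \<Rightarrow> 's) \<Rightarrow> 's set \<Rightarrow> 's set \<Rightarrow> 's set" where
  "gprod f A B = {f a \<gamma> b | a \<gamma> b. a \<in> A \<and> b \<in> B}"

definition intra_regular :: "('s \<Rightarrow> 'g \<Rightarrow> 's \<Rightarrow> 's) \<Rightarrow> bool" where
  "intra_regular f \<longleftrightarrow>
     (\<forall>a. \<exists>x y \<beta> \<gamma> \<delta>. a = f (f x \<beta> (f a \<delta> a)) \<gamma> y)"

definition two_sided_gamma_ideal :: "('s \<Rightarrow> 'g \<Rightarrow> 's \<Rightarrow> 's) \<Rightarrow> 's set \<Rightarrow> bool" where
  "two_sided_gamma_ideal f A \<longleftrightarrow> A \<noteq> {} \<and>
     gprod f UNIV A \<subseteq> A \<and> gprod f A UNIV \<subseteq> A"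

end

theory Submission
  imports Defs
begin

(* The inclusion I \<Gamma> J \<subseteq> I \<inter> J holds for any two-sided ideals
   of any \<Gamma>-groupoid: a product i \<gamma> j lies in I since I absorbs on the right,
   and in J since J absorbs on the left.
   For the converse we use intra-regularity: a = (x \<beta> (a \<delta> a)) \<gamma> y.
   The medial-type law a \<alpha> (b \<beta> c) = b \<alpha> (a \<beta> c) moves the first a out,
   giving a = (a \<beta> (x \<delta> a)) \<gamma> y, and the left invertive law of a
   \<Gamma>-AG-groupoid swaps a and y, giving a = (y \<beta> (x \<delta> a)) \<gamma> a.
   So every a has the form s \<gamma> a with s \<in> S \<Gamma> (S \<Gamma> a); if a lies in the
   left ideal I then s \<in> I, so a \<in> I \<Gamma> {a}, which is contained in I \<Gamma> J
   when a also lies in J. *)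

lemma gprodI: "a \<in> A \<Longrightarrow> b \<in> B \<Longrightarrow> f a \<gamma> b \<in> gprod f A B"
  unfolding gprod_def by blast

lemma gprod_mono_right: "B \<subseteq> C \<Longrightarrow> gprod f A B \<subseteq> gprod f A C"
  unfolding gprod_def by blast

lemma ideal_absorbs_left:
  assumes "two_sided_gamma_ideal f A" and "v \<in> A"
  shows "f u \<gamma> v \<in> A"
  using assms gprodI[of u UNIV v A f \<gamma>] unfolding two_sided_gamma_ideal_def by blast

lemma ideal_absorbs_right:
  assumes "two_sided_gamma_ideal f A" and "u \<in> A"
  shows "f u \<gamma> v \<in> A"
  using assms gprodI[of u A v UNIV f \<gamma>] unfolding two_sided_gamma_ideal_def by blast

lemma gprod_ideals_subset_Int:
  assumes "two_sided_gamma_ideal f I" and "two_sided_gamma_ideal f J"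
  shows "gprod f I J \<subseteq> I \<inter> J"
  using ideal_absorbs_right[OF assms(1)] ideal_absorbs_left[OF assms(2)]
  unfolding gprod_def by blast

lemma intra_regular_factor:
  assumes AG2: "gamma_AG2_groupoid f" and IR: "intra_regular f"
  shows "\<exists>x y \<beta> \<gamma> \<delta>. a = f (f y \<beta> (f x \<delta> a)) \<gamma> a"
proof -
  obtain x y \<beta> \<gamma> \<delta> where a_eq: "a = f (f x \<beta> (f a \<delta> a)) \<gamma> y"
    using IR unfolding intra_regular_def by blast
  have medial: "f x \<beta> (f a \<delta> a) = f a \<beta> (f x \<delta> a)"
    using AG2 unfolding gamma_AG2_groupoid_def by blast
  have invertive: "f (f a \<beta> (f x \<delta> a)) \<gamma> y = f (f y \<beta> (f x \<delta> a)) \<gamma> a"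
    using AG2 unfolding gamma_AG2_groupoid_def gamma_AG_groupoid_def by blast
  have "a = f (f y \<beta> (f x \<delta> a)) \<gamma> a"
    using a_eq medial invertive by simp
  then show ?thesis by blast
qed

lemma intra_regular_in_ideal_prod:
  assumes "gamma_AG2_groupoid f" and "intra_regular f"
    and "two_sided_gamma_ideal f I" and "a \<in> I"
  shows "a \<in> gprod f I {a}"
proof -
  obtain x y \<beta> \<gamma> \<delta> where a_eq: "a = f (f y \<beta> (f x \<delta> a)) \<gamma> a"
    using intra_regular_factor[OF assms(1,2)] by blast
  have "f y \<beta> (f x \<delta> a) \<in> I"
    using ideal_absorbs_left[OF assms(3)] assms(4) by blast
  then show ?thesis
    using gprodI[of _ I a "{a}" f \<gamma>] a_eq by (metis singletonI)
qed

theorem mainTheorem11: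
  fixes f :: "'s \<Rightarrow> 'g \<Rightarrow> 's \<Rightarrow> 's"
  assumes "gamma_AG2_groupoid f" and "intra_regular f"
    and "two_sided_gamma_ideal f I" and "two_sided_gamma_ideal f J"
  shows "gprod f I J = I \<inter> J"
proof
  show "gprod f I J \<subseteq> I \<inter> J"
    using gprod_ideals_subset_Int[OF assms(3,4)] .
  show "I \<inter> J \<subseteq> gprod f I J"
  proof
    fix a assume a: "a \<in> I \<inter> J"
    then have "a \<in> gprod f I {a}"
      using intra_regular_in_ideal_prod[OF assms(1-3)] by blast
    also have "gprod f I {a} \<subseteq> gprod f I J"
      using a by (intro gprod_mono_right) blast
    finally show "a \<in> gprod f I J" .
  qed
qed

end
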